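(* Let $X$ be a completely regular I-favorable space and let $\mathcal T$ be the family of all cozero subsets of $X$. Let $\mathcal C$ be a $\mathcal T$-club (defined in the context). For $\mathcal P\subseteq\mathcal R$ in $\mathcal C$ define $q^{\mathcal R}_{\mathcal P}:X/\mathcal R\to X/\mathcal P$ by $q^{\mathcal R}_{\mathcal P}([x]_{\mathcal R})=[x]_{\mathcal P}$, where each $X/\mathcal P$ carries the $\mathcal Q_{\mathcal P}$-topology. Then the limit $Y=\varprojlim\{X/\mathcal R,q^{\mathcal R}_{\mathcal P},\mathcal C\}$ (with $\mathcal C$ directed by inclusion) contains a dense subspace homeomorphic to $X$.
   Context: For a family $\mathcal P$ of subsets of a set $X$ and $x\in X$, $[x]_{\mathcal P}=\{y\in X: \text{for every }V\in\mathcal P,\ x\in V\iff y\in V\}$; $X/\mathcal P$ is the set of all classes $[x]_{\mathcal P}$, and $q_{\mathcal P}:X\to X/\mathcal P$, $q_{\mathcal P}(x)=[x]_{\mathcal P}$, is the $\mathcal Q_{\mathcal P}$-map. The $\mathcal Q_{\mathcal P}$-topology on $X/\mathcal P$ is the coarsest topology containing all sets $q_{\mathcal P}[V]$, $V\in\mathcal P$. For a family $\mathcal R$ of subsets of $X$, $\mathcal R_{seq}$ is the family of all sets $W$ for which there are $\{U_n\}_{n\in\omega}\subseteq\mathcal R$ and $\{V_n\}_{n\in\omega}\subseteq\mathcal R$ with $U_k\subseteq X\setminus V_k\subseteq U_{k+1}$ for all $k$ and $\bigcup_n U_n=W$. Open-open game: at inning $n$ Player I chooses a non-empty open $A_n$,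 Player II a non-empty open $B_n\subseteq A_n$; Player I wins if $\bigcup_n B_n$ is dense; $X$ is I-favorable if Player I has a winning strategy. A strategy is a function $\sigma$ on finite sequences (including the empty one) of members of a family of sets with values in that family; a family $\mathcal P$ is closed under $\sigma$ if $\sigma(\emptyset)\in\mathcal P$ and $\sigma(B_0,\dots,B_n)\in\mathcal P$ whenever $B_0,\dots,B_n\in\mathcal P$. $\mathcal T$-club: for each $W\in\mathcal T$ fix sequences $\{U^W_n\},\{V^W_n\}\subseteq\mathcal T$ witnessing $W\in\mathcal T_{seq}$ (possible since $W=f^{-1}((0,1])$ for a continuous $f:X\to[0,1]$). Choose $\sigma^*_k(\emptyset)\in\mathcal T$ for each $k$, put $\sigma^*_{2n}(W)=U^W_n$, $\sigma^*_{2n+1}(W)=V^W_n$ and $\sigma^*_k(S)=\sigma^*_k(\emptyset)$ for all other finite sequences $S$. Let also $\sigma_\cup(A_0,\dots,A_n)=A_0\cup\dots\cup A_n$ and $\sigma_\cap(A_0,\dots,A_n)=A_0\cap\dots\cap A_n$, and fix a winning strategy for Player I with values in $\mathcal T$. For a countable $\mathcal Q\subseteq\mathcal T$ let $\mathcal P(\mathcal Q)$ be the smallest family with $\mathcal Q\subseteq\mathcal P(\mathcal Q)\subseteq\mathcal T$ closed under this winning strategy, all $\sigma^*_k$, $\sigma_\cup$ and $\sigma_\cap$. A $\mathcal T$-club is the collection $\mathcal C=\{\mathcal P(\mathcal Q):\mathcal Q\subseteq\mathcal T\text{ countable}\}$; each member is countable, a ring of sets (closed under finite unions and intersections), contained in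 its own $seq$-family and closed under a winning strategy for Player I. *)

theory Defs
  imports "HOL-Analysis.Analysis"
begin

definition cozero_sets :: "'a topology \<Rightarrow> 'a set set" where
  "cozero_sets X = {{x \<in> topspace X. f x \<noteq> 0} | f. continuous_map X euclideanreal f}"

text \<open>A play consistent with the strategy: Player I plays
  sigma of the moves of Player II so far, Player II answers with a non-empty open
  subset.\<close>
definition I_winning_strategy :: "'a topology \<Rightarrow> ('a set list \<Rightarrow> 'a set) \<Rightarrow> bool" where
  "I_winning_strategy X \<sigma> \<longleftrightarrow>
     (\<forall>S. (\<forall>B\<in>set S. openin X B \<and> B \<noteq> {}) \<longrightarrow> openin X (\<sigma> S) \<and> \<sigma> S \<noteq> {}) \<and>
     (\<forall>B :: nat \<Rightarrow> 'a set.
        (\<forall>n. openin X (B n) \<and> B n \<noteq> {} \<and> B n \<subseteq> \<sigma> (map B [0..<n]))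
        \<longrightarrow> X closure_of (\<Union>n. B n) = topspace X)"

definition I_favorable :: "'a topology \<Rightarrow> bool" where
  "I_favorable X \<longleftrightarrow> (\<exists>\<sigma>. I_winning_strategy X \<sigma>)"

definition I_winning_strategy_in :: "'a topology \<Rightarrow> 'a set set \<Rightarrow> ('a set list \<Rightarrow> 'a set) \<Rightarrow> bool" where
  "I_winning_strategy_in X \<T> \<sigma> \<longleftrightarrow>
     (\<forall>S. set S \<subseteq> \<T> \<longrightarrow> \<sigma> S \<in> \<T>) \<and>
     (\<forall>S. (\<forall>B\<in>set S. B \<in> \<T> \<and> B \<noteq> {}) \<longrightarrow> \<sigma> S \<noteq> {}) \<and>
     (\<forall>B :: nat \<Rightarrow> 'a set.
        (\<forall>n. B n \<in> \<T> \<and> B n \<noteq> {} \<and> B n \<subseteq> \<sigma> (map B [0..<n]))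
        \<longrightarrow> X closure_of (\<Union>n. B n) = topspace X)"

definition closed_under_strategy :: "'a set set \<Rightarrow> ('a set list \<Rightarrow> 'a set) \<Rightarrow> bool" where
  "closed_under_strategy \<P> \<sigma> \<longleftrightarrow> \<sigma> [] \<in> \<P> \<and> (\<forall>S. S \<noteq> [] \<and> set S \<subseteq> \<P> \<longrightarrow> \<sigma> S \<in> \<P>)"

definition closed_under_sigma_union_inter :: "'a set set \<Rightarrow> bool" where
  "closed_under_sigma_union_inter \<P> \<longleftrightarrow>
     (\<forall>S. S \<noteq> [] \<and> set S \<subseteq> \<P> \<longrightarrow> \<Union>(set S) \<in> \<P> \<and> \<Inter>(set S) \<in> \<P>)"

definition seq_witness :: "'a topology \<Rightarrow> 'a set set \<Rightarrow> 'a set \<Rightarrow> (nat \<Rightarrow> 'a set) \<Rightarrow> (nat \<Rightarrow> 'a set) \<Rightarrow> bool" where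
  "seq_witness X \<R> W U V \<longleftrightarrow>
     (\<forall>n. U n \<in> \<R> \<and> V n \<in> \<R>) \<and>
     (\<forall>k. U k \<subseteq> topspace X - V k \<and> topspace X - V k \<subseteq> U (Suc k)) \<and>
     (\<Union>n. U n) = W"

definition sigma_star ::
  "'a set set \<Rightarrow> ('a set \<Rightarrow> nat \<Rightarrow> 'a set) \<Rightarrow> ('a set \<Rightarrow> nat \<Rightarrow> 'a set) \<Rightarrow> (nat \<Rightarrow> 'a set)
     \<Rightarrow> nat \<Rightarrow> 'a set list \<Rightarrow> 'a set" where
  "sigma_star \<T> U V e k S =
     (case S of
        [W] \<Rightarrow> (if W \<in> \<T> then (if even k then U W (k div 2) else V W (k div 2)) else e k)
      | _ \<Rightarrow> e k)"

definition club_family ::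
  "'a set set \<Rightarrow> ('a set list \<Rightarrow> 'a set) \<Rightarrow> ('a set \<Rightarrow> nat \<Rightarrow> 'a set) \<Rightarrow> ('a set \<Rightarrow> nat \<Rightarrow> 'a set)
     \<Rightarrow> (nat \<Rightarrow> 'a set) \<Rightarrow> 'a set set \<Rightarrow> 'a set set" where
  "club_family \<T> \<sigma> U V e \<Q> =
     \<Inter>{\<P>. \<Q> \<subseteq> \<P> \<and> \<P> \<subseteq> \<T> \<and> closed_under_strategy \<P> \<sigma>
          \<and> (\<forall>k. closed_under_strategy \<P> (sigma_star \<T> U V e k))
          \<and> closed_under_sigma_union_inter \<P>}"

definition is_T_club :: "'a topology \<Rightarrow> 'a set set set \<Rightarrow> bool" where
  "is_T_club X \<C> \<longleftrightarrow>
     (\<exists>\<sigma> U V e.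
        (\<forall>W\<in>cozero_sets X. seq_witness X (cozero_sets X) W (U W) (V W)) \<and>
        (\<forall>k. e k \<in> cozero_sets X) \<and>
        I_winning_strategy_in X (cozero_sets X) \<sigma> \<and>
        \<C> = {club_family (cozero_sets X) \<sigma> U V e \<Q> | \<Q>. countable \<Q> \<and> \<Q> \<subseteq> cozero_sets X})"

definition pclass :: "'a topology \<Rightarrow> 'a set set \<Rightarrow> 'a \<Rightarrow> 'a set" where
  "pclass X \<P> x = {y \<in> topspace X. \<forall>V\<in>\<P>. x \<in> V \<longleftrightarrow> y \<in> V}"

definition pquot :: "'a topology \<Rightarrow> 'a set set \<Rightarrow> 'a set set" where
  "pquot X \<P> = pclass X \<P> ` topspace X"

definition QP_topology :: "'a topology \<Rightarrow> 'a set set \<Rightarrow> 'a set topology" where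
  "QP_topology X \<P> =
     topology_generated_by (insert (pquot X \<P>) ((\<lambda>V. pclass X \<P> ` V) ` \<P>))"

definition bond_map :: "'a topology \<Rightarrow> 'a set set \<Rightarrow> 'a set \<Rightarrow> 'a set" where
  "bond_map X \<P> c = pclass X \<P> (SOME x. x \<in> c)"

definition inverse_limit :: "'a topology \<Rightarrow> 'a set set set \<Rightarrow> ('a set set \<Rightarrow> 'a set) topology" where
  "inverse_limit X \<C> =
     subtopology (product_topology (\<lambda>\<P>. QP_topology X \<P>) \<C>)
       {y. \<forall>\<P>\<in>\<C>. \<forall>\<R>\<in>\<C>. \<P> \<subseteq> \<R> \<longrightarrow> bond_map X \<P> (y \<R>) = y \<P>}"

end

theory Submission
  imports Defs
begin

text \<open>Send each point \<open>x\<close> to its thread \<open>([x]\<^sub>\<P>)\<^sub>\<P>\<^sub>\<in>\<^sub>\<C>\<close>. A basic neighbourhood of a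
  point \<open>y\<close> of the limit constrains finitely many coordinates; they all lie below one
  \<open>\<R> \<in> \<C>\<close> because the club is directed, and any \<open>x\<close> with \<open>y\<^sub>\<R> = [x]\<^sub>\<R>\<close> has a thread
  agreeing with \<open>y\<close> there, so the threads are dense. Since \<open>X\<close> is completely regular, the
  cozero sets form a base, and each of them belongs to a member \<open>\<P>\<close> of the club; the
  open set \<open>{y. y\<^sub>\<P> \<in> q\<^sub>\<P>[W]}\<close> of the limit meets the threads exactly in the threads of the
  points of \<open>W\<close>, so the thread map is an embedding.\<close>

section \<open>Cozero sets\<close>

lemma openin_cozero_sets:
  assumes "W \<in> cozero_sets X"
  shows "openin X W"
proof -
  obtain f where f: "continuous_map X euclideanreal f" and W: "W = {x \<in> topspace X. f x \<noteq> 0}"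
    using assms by (auto simp: cozero_sets_def)
  have "openin X {x \<in> topspace X. f x \<in> - {0}}"
    by (rule openin_continuous_map_preimage[OF f]) auto
  then show ?thesis
    using W by simp
qed

lemma cozero_setsI:
  "continuous_map X euclideanreal f \<Longrightarrow> {x \<in> topspace X. f x \<noteq> 0} \<in> cozero_sets X"
  by (auto simp: cozero_sets_def)

lemma cozero_sets_Int:
  assumes "A \<in> cozero_sets X" "B \<in> cozero_sets X"
  shows "A \<inter> B \<in> cozero_sets X"
proof -
  obtain f where f: "continuous_map X euclideanreal f" and A: "A = {x \<in> topspace X. f x \<noteq> 0}"
    using assms(1) by (auto simp: cozero_sets_def)
  obtain g where g: "continuous_map X euclideanreal g" and B: "B = {x \<in> topspace X. g x \<noteq> 0}"
    using assms(2) by (auto simp: cozero_sets_def)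
  from A B have "A \<inter> B = {x \<in> topspace X. f x * g x \<noteq> 0}"
    by auto
  moreover have "continuous_map X euclideanreal (\<lambda>x. f x * g x)"
    using f g by (intro continuous_intros)
  ultimately show ?thesis
    by (simp only: cozero_setsI)
qed

lemma cozero_sets_Un:
  assumes "A \<in> cozero_sets X" "B \<in> cozero_sets X"
  shows "A \<union> B \<in> cozero_sets X"
proof -
  obtain f where f: "continuous_map X euclideanreal f" and A: "A = {x \<in> topspace X. f x \<noteq> 0}"
    using assms(1) by (auto simp: cozero_sets_def)
  obtain g where g: "continuous_map X euclideanreal g" and B: "B = {x \<in> topspace X. g x \<noteq> 0}"
    using assms(2) by (auto simp: cozero_sets_def)
  from A B have "A \<union> B = {x \<in> topspace X. f x * f x + g x * g x \<noteq> 0}"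
    by (auto simp: sum_squares_eq_zero_iff)
  moreover have "continuous_map X euclideanreal (\<lambda>x. f x * f x + g x * g x)"
    using f g by (intro continuous_intros)
  ultimately show ?thesis
    by (simp only: cozero_setsI)
qed

lemma closed_under_sigma_union_inter_cozero_sets:
  "closed_under_sigma_union_inter (cozero_sets X)"
proof -
  have "\<Union>(set S) \<in> cozero_sets X \<and> \<Inter>(set S) \<in> cozero_sets X"
    if "S \<noteq> []" "set S \<subseteq> cozero_sets X" for S
    using that
  proof (induction S)
    case (Cons A S)
    then show ?case
      by (cases "S = []") (auto intro: cozero_sets_Un cozero_sets_Int)
  qed simp
  then show ?thesis
    by (simp add: closed_under_sigma_union_inter_def)
qed

lemma completely_regular_space_cozero_base:
  assumes "completely_regular_space X" "openin X U" "x \<in> U"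
  shows "\<exists>W \<in> cozero_sets X. x \<in> W \<and> W \<subseteq> U"
proof -
  have "\<forall>S x. openin X S \<longrightarrow> x \<in> S \<longrightarrow>
          (\<exists>f. continuous_map X euclideanreal f \<and> f x = 1 \<and> f ` (topspace X - S) \<subseteq> {0})"
    using assms(1) completely_regular_space_gen_alt'[of "1::real" 0 X] by simp
  then obtain f where f: "continuous_map X euclideanreal f" and f1: "f x = 1"
    and f0: "f ` (topspace X - U) \<subseteq> {0}"
    using assms(2,3) by blast
  have "x \<in> {y \<in> topspace X. f y \<noteq> 0}"
    using f1 assms(2,3) openin_subset by auto
  moreover have "{y \<in> topspace X. f y \<noteq> 0} \<subseteq> U"
    using f0 by (auto simp: image_subset_iff)
  ultimately show ?thesis
    using cozero_setsI[OF f] by (intro bexI[of _ "{y \<in> topspace X. f y \<noteq> 0}"] conjI)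
qed

section \<open>The club\<close>

lemma club_family_mono: "\<Q> \<subseteq> \<Q>' \<Longrightarrow> club_family \<T> \<sigma> U V e \<Q> \<subseteq> club_family \<T> \<sigma> U V e \<Q>'"
  unfolding club_family_def by blast

lemma subset_club_family: "\<Q> \<subseteq> club_family \<T> \<sigma> U V e \<Q>"
  unfolding club_family_def by blast

lemma club_family_subset_cozero_sets:
  assumes "\<forall>W\<in>cozero_sets X. seq_witness X (cozero_sets X) W (U W) (V W)"
    and "\<forall>k. e k \<in> cozero_sets X" and "I_winning_strategy_in X (cozero_sets X) \<sigma>"
    and "\<Q> \<subseteq> cozero_sets X"
  shows "club_family (cozero_sets X) \<sigma> U V e \<Q> \<subseteq> cozero_sets X"
proof -
  have "closed_under_strategy (cozero_sets X) \<sigma>"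
    using assms(3) by (auto simp: I_winning_strategy_in_def closed_under_strategy_def)
  moreover have "sigma_star (cozero_sets X) U V e k S \<in> cozero_sets X" for k S
    using assms(1,2) by (auto simp: sigma_star_def seq_witness_def split: list.split)
  then have "closed_under_strategy (cozero_sets X) (sigma_star (cozero_sets X) U V e k)" for k
    by (simp add: closed_under_strategy_def)
  ultimately show ?thesis
    unfolding club_family_def
    using assms(4) closed_under_sigma_union_inter_cozero_sets by (intro Inter_lower) simp
qed

lemma T_club_subset_cozero_sets:
  assumes "is_T_club X \<C>" "\<P> \<in> \<C>"
  shows "\<P> \<subseteq> cozero_sets X"
proof -
  obtain \<sigma> U V e \<Q> where "\<forall>W\<in>cozero_sets X. seq_witness X (cozero_sets X) W (U W) (V W)"
    "\<forall>k. e k \<in> cozero_sets X" "I_winning_strategy_in X (cozero_sets X) \<sigma>"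
    "\<Q> \<subseteq> cozero_sets X" "\<P> = club_family (cozero_sets X) \<sigma> U V e \<Q>"
    using assms unfolding is_T_club_def by blast
  then show ?thesis
    using club_family_subset_cozero_sets by blast
qed

lemma T_club_covers_cozero_sets:
  assumes "is_T_club X \<C>" "W \<in> cozero_sets X"
  shows "\<exists>\<P>\<in>\<C>. W \<in> \<P>"
proof -
  obtain \<sigma> U V e where \<C>: "\<C> = {club_family (cozero_sets X) \<sigma> U V e \<Q> | \<Q>. countable \<Q> \<and> \<Q> \<subseteq> cozero_sets X}"
    using assms(1) unfolding is_T_club_def by blast
  have "club_family (cozero_sets X) \<sigma> U V e {W} \<in> \<C>"
    unfolding \<C> using assms(2) by (intro CollectI exI[of _ "{W}"]) simp
  moreover have "W \<in> club_family (cozero_sets X) \<sigma> U V e {W}"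
    by (rule subsetD[OF subset_club_family]) simp
  ultimately show ?thesis
    by blast
qed

lemma T_club_directed:
  assumes "is_T_club X \<C>" "finite \<F>" "\<F> \<subseteq> \<C>"
  shows "\<exists>\<R>\<in>\<C>. \<forall>\<P>\<in>\<F>. \<P> \<subseteq> \<R>"
proof -
  obtain \<sigma> U V e where \<C>: "\<C> = {club_family (cozero_sets X) \<sigma> U V e \<Q> | \<Q>. countable \<Q> \<and> \<Q> \<subseteq> cozero_sets X}"
    using assms(1) unfolding is_T_club_def by blast
  define cl where "cl = club_family (cozero_sets X) \<sigma> U V e"
  have "\<forall>\<P>\<in>\<C>. \<exists>\<Q>. \<P> = cl \<Q> \<and> countable \<Q> \<and> \<Q> \<subseteq> cozero_sets X"
    unfolding \<C> cl_def by blast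
  then obtain gen where gen: "\<And>\<P>. \<P> \<in> \<C> \<Longrightarrow> \<P> = cl (gen \<P>) \<and> countable (gen \<P>) \<and> gen \<P> \<subseteq> cozero_sets X"
    by metis
  define \<Q> where "\<Q> = (\<Union>\<P>\<in>\<F>. gen \<P>)"
  have "countable \<Q>"
    unfolding \<Q>_def using assms(2,3) gen by (intro countable_UN) (auto simp: countable_finite)
  moreover have "\<Q> \<subseteq> cozero_sets X"
    unfolding \<Q>_def using assms(3) gen by blast
  ultimately have "cl \<Q> \<in> \<C>"
    unfolding \<C> cl_def by (intro CollectI exI[of _ \<Q>]) simp
  moreover have "\<P> \<subseteq> cl \<Q>" if "\<P> \<in> \<F>" for \<P>
  proof -
    have "\<P> = cl (gen \<P>)"
      using that assms(3) gen by blast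
    also have "\<dots> \<subseteq> cl \<Q>"
      unfolding cl_def \<Q>_def using that by (intro club_family_mono) blast
    finally show ?thesis .
  qed
  ultimately show ?thesis
    by blast
qed

lemma T_club_openin: "is_T_club X \<C> \<Longrightarrow> \<P> \<in> \<C> \<Longrightarrow> V \<in> \<P> \<Longrightarrow> openin X V"
  using T_club_subset_cozero_sets openin_cozero_sets by blast

lemma T_club_cozero_base:
  assumes "completely_regular_space X" "is_T_club X \<C>" "openin X U" "x \<in> U"
  shows "\<exists>\<P>\<in>\<C>. \<exists>W\<in>\<P>. x \<in> W \<and> W \<subseteq> U"
proof -
  obtain W where "W \<in> cozero_sets X" "x \<in> W" "W \<subseteq> U"
    using completely_regular_space_cozero_base[OF assms(1,3,4)] by blast
  then show ?thesis
    using T_club_covers_cozero_sets[OF assms(2)] by blast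
qed

section \<open>The quotients \<open>X/\<P>\<close>\<close>

lemma pclass_eq_iff:
  assumes "x \<in> topspace X" "y \<in> topspace X"
  shows "pclass X \<P> x = pclass X \<P> y \<longleftrightarrow> (\<forall>V\<in>\<P>. x \<in> V \<longleftrightarrow> y \<in> V)"
proof
  assume "pclass X \<P> x = pclass X \<P> y"
  then have "y \<in> pclass X \<P> x"
    using assms(2) by (simp add: pclass_def)
  then show "\<forall>V\<in>\<P>. x \<in> V \<longleftrightarrow> y \<in> V"
    by (simp add: pclass_def)
qed (auto simp: pclass_def)

lemma pclass_in_image_iff:
  assumes "x \<in> topspace X" "V \<subseteq> topspace X" "V \<in> \<P>"
  shows "pclass X \<P> x \<in> pclass X \<P> ` V \<longleftrightarrow> x \<in> V"
proof
  assume "pclass X \<P> x \<in> pclass X \<P> ` V"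
  then obtain v where "v \<in> V" "pclass X \<P> x = pclass X \<P> v"
    by auto
  then show "x \<in> V"
    using assms pclass_eq_iff[OF assms(1), of v \<P>] by auto
qed auto

lemma bond_map_pclass:
  assumes "x \<in> topspace X" "\<P> \<subseteq> \<R>"
  shows "bond_map X \<P> (pclass X \<R> x) = pclass X \<P> x"
proof -
  define z where "z = (SOME z. z \<in> pclass X \<R> x)"
  have "x \<in> pclass X \<R> x"
    using assms(1) by (simp add: pclass_def)
  then have "z \<in> pclass X \<R> x"
    unfolding z_def by (rule someI)
  then have z: "z \<in> topspace X" "\<forall>V\<in>\<R>. x \<in> V \<longleftrightarrow> z \<in> V"
    by (auto simp: pclass_def)
  have "pclass X \<P> z = pclass X \<P> x"
    using pclass_eq_iff[OF z(1) assms(1)] z(2) assms(2) by blast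
  then show ?thesis
    unfolding bond_map_def z_def .
qed

lemma topspace_QP_topology:
  assumes "\<And>V. V \<in> \<P> \<Longrightarrow> V \<subseteq> topspace X"
  shows "topspace (QP_topology X \<P>) = pquot X \<P>"
  using assms unfolding QP_topology_def pquot_def by fastforce

lemma openin_QP_topology_image: "V \<in> \<P> \<Longrightarrow> openin (QP_topology X \<P>) (pclass X \<P> ` V)"
  unfolding QP_topology_def by (rule topology_generated_by_Basis) blast

lemma continuous_map_pclass:
  assumes "\<And>V. V \<in> \<P> \<Longrightarrow> openin X V"
  shows "continuous_map X (QP_topology X \<P>) (pclass X \<P>)"
  unfolding QP_topology_def
proof (rule continuous_on_generated_topo)
  fix S assume "S \<in> insert (pquot X \<P>) ((\<lambda>V. pclass X \<P> ` V) ` \<P>)"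
  then consider "S = pquot X \<P>" | V where "V \<in> \<P>" "S = pclass X \<P> ` V"
    by auto
  then show "openin X (pclass X \<P> -` S \<inter> topspace X)"
  proof cases
    case 1
    then have "pclass X \<P> -` S \<inter> topspace X = topspace X"
      unfolding pquot_def by auto
    then show ?thesis
      by simp
  next
    case 2
    have V: "V \<subseteq> topspace X"
      using assms[OF 2(1)] by (rule openin_subset)
    have "pclass X \<P> -` S \<inter> topspace X = V"
      using 2 pclass_in_image_iff[OF _ V 2(1)] V by auto
    then show ?thesis
      using assms 2 by simp
  qed
qed (auto simp: pquot_def)

section \<open>Threads\<close>

definition thread :: "'a topology \<Rightarrow> 'a set set set \<Rightarrow> 'a \<Rightarrow> 'a set set \<Rightarrow> 'a set" where
  "thread X \<C> x = (\<lambda>\<P>\<in>\<C>. pclass X \<P> x)"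

lemma thread_in_image_iff:
  assumes "\<P> \<in> \<C>" "V \<in> \<P>" "V \<subseteq> topspace X" "x \<in> topspace X"
  shows "thread X \<C> x \<P> \<in> pclass X \<P> ` V \<longleftrightarrow> x \<in> V"
  using assms pclass_in_image_iff by (simp add: thread_def)

lemma openin_inverse_limit_preimage:
  assumes "\<P> \<in> \<C>" "V \<in> \<P>"
  shows "openin (inverse_limit X \<C>) {y \<in> topspace (inverse_limit X \<C>). y \<P> \<in> pclass X \<P> ` V}"
proof -
  have "continuous_map (inverse_limit X \<C>) (QP_topology X \<P>) (\<lambda>y. y \<P>)"
    unfolding inverse_limit_def
    by (intro continuous_map_from_subtopology continuous_map_product_projection assms(1))
  then show ?thesis
    using openin_QP_topology_image[OF assms(2)] by (rule openin_continuous_map_preimage)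
qed

context
  fixes X :: "'a topology" and \<C> :: "'a set set set"
  assumes openin_members: "\<And>\<P> V. \<P> \<in> \<C> \<Longrightarrow> V \<in> \<P> \<Longrightarrow> openin X V"
begin

lemma continuous_map_thread: "continuous_map X (inverse_limit X \<C>) (thread X \<C>)"
proof -
  have "continuous_map X (QP_topology X \<P>) (\<lambda>x. thread X \<C> x \<P>)" if "\<P> \<in> \<C>" for \<P>
    using continuous_map_pclass[of \<P> X] openin_members that by (simp add: thread_def)
  moreover have "thread X \<C> ` topspace X \<subseteq> extensional \<C>"
    by (auto simp: thread_def)
  moreover have "thread X \<C> ` topspace X
                   \<subseteq> {y. \<forall>\<P>\<in>\<C>. \<forall>\<R>\<in>\<C>. \<P> \<subseteq> \<R> \<longrightarrow> bond_map X \<P> (y \<R>) = y \<P>}"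
    by (auto simp: thread_def bond_map_pclass)
  ultimately show ?thesis
    unfolding inverse_limit_def continuous_map_in_subtopology continuous_map_componentwise
    by blast
qed

lemma thread_agrees_below:
  assumes "y \<in> topspace (inverse_limit X \<C>)" "\<R> \<in> \<C>"
  shows "\<exists>x\<in>topspace X. \<forall>\<P>\<in>\<C>. \<P> \<subseteq> \<R> \<longrightarrow> thread X \<C> x \<P> = y \<P>"
proof -
  have y: "y \<R> \<in> topspace (QP_topology X \<R>)"
    and bonds: "\<forall>\<P>\<in>\<C>. \<P> \<subseteq> \<R> \<longrightarrow> bond_map X \<P> (y \<R>) = y \<P>"
    using assms by (auto simp: inverse_limit_def)
  have "topspace (QP_topology X \<R>) = pquot X \<R>"
    using openin_members assms(2) openin_subset by (intro topspace_QP_topology) blast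
  then obtain x where x: "x \<in> topspace X" "y \<R> = pclass X \<R> x"
    using y by (auto simp: pquot_def)
  have "thread X \<C> x \<P> = y \<P>" if "\<P> \<in> \<C>" "\<P> \<subseteq> \<R>" for \<P>
  proof -
    have "thread X \<C> x \<P> = bond_map X \<P> (pclass X \<R> x)"
      using that x(1) by (simp add: thread_def bond_map_pclass)
    also have "\<dots> = y \<P>"
      using bonds that x(2) by simp
    finally show ?thesis .
  qed
  then show ?thesis
    using x(1) by blast
qed

lemma dense_thread_image:
  assumes directed: "\<And>\<F>. finite \<F> \<Longrightarrow> \<F> \<subseteq> \<C> \<Longrightarrow> \<exists>\<R>\<in>\<C>. \<forall>\<P>\<in>\<F>. \<P> \<subseteq> \<R>"
  shows "inverse_limit X \<C> closure_of (thread X \<C> ` topspace X) = topspace (inverse_limit X \<C>)"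
  unfolding dense_intersects_open
proof (intro allI impI)
  define Y where "Y = product_topology (QP_topology X) \<C>"
  define Lim where "Lim = {y. \<forall>\<P>\<in>\<C>. \<forall>\<R>\<in>\<C>. \<P> \<subseteq> \<R> \<longrightarrow> bond_map X \<P> (y \<R>) = y \<P>}"
  have L: "inverse_limit X \<C> = subtopology Y Lim"
    unfolding inverse_limit_def Y_def Lim_def by simp
  have thread_in_L: "thread X \<C> x \<in> topspace Y \<inter> Lim" if "x \<in> topspace X" for x
    using continuous_map_image_subset_topspace[OF continuous_map_thread] that L by auto
  fix T assume T: "openin (inverse_limit X \<C>) T \<and> T \<noteq> {}"
  then obtain T' where T': "openin Y T'" "T = T' \<inter> Lim"
    unfolding L openin_subtopology by blast
  obtain y where "y \<in> T"
    using T by blast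
  then have y: "y \<in> topspace (inverse_limit X \<C>)"
    using T openin_subset by blast
  have "y \<in> T'"
    using \<open>y \<in> T\<close> T'(2) by blast
  then have "\<exists>U. finite {\<P> \<in> \<C>. U \<P> \<noteq> topspace (QP_topology X \<P>)} \<and>
           (\<forall>\<P>\<in>\<C>. openin (QP_topology X \<P>) (U \<P>)) \<and> y \<in> Pi\<^sub>E \<C> U \<and> Pi\<^sub>E \<C> U \<subseteq> T'"
    using openin_product_topology_alt[THEN iffD1, OF T'(1)[unfolded Y_def]] by (rule bspec[rotated])
  then obtain U where fin: "finite {\<P> \<in> \<C>. U \<P> \<noteq> topspace (QP_topology X \<P>)}"
    and "y \<in> Pi\<^sub>E \<C> U" "Pi\<^sub>E \<C> U \<subseteq> T'"
    by blast
  obtain \<R> where "\<R> \<in> \<C>" and \<R>: "\<forall>\<P>\<in>{\<P> \<in> \<C>. U \<P> \<noteq> topspace (QP_topology X \<P>)}. \<P> \<subseteq> \<R>"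
    using directed[OF fin] by blast
  obtain x where x: "x \<in> topspace X" and agree: "\<forall>\<P>\<in>\<C>. \<P> \<subseteq> \<R> \<longrightarrow> thread X \<C> x \<P> = y \<P>"
    using thread_agrees_below[OF y \<open>\<R> \<in> \<C>\<close>] by blast
  have "thread X \<C> x \<P> \<in> U \<P>" if "\<P> \<in> \<C>" for \<P>
  proof (cases "U \<P> = topspace (QP_topology X \<P>)")
    case True
    then show ?thesis
      using thread_in_L[OF x] that unfolding Y_def by auto
  next
    case False
    then show ?thesis
      using \<R> agree that \<open>y \<in> Pi\<^sub>E \<C> U\<close> by auto
  qed
  then have "thread X \<C> x \<in> Pi\<^sub>E \<C> U"
    by (simp add: PiE_iff thread_def)
  then have "thread X \<C> x \<in> T"
    using thread_in_L[OF x] T' \<open>Pi\<^sub>E \<C> U \<subseteq> T'\<close> by blast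
  then show "thread X \<C> ` topspace X \<inter> T \<noteq> {}"
    using x by blast
qed

context
  assumes base: "\<And>U x. openin X U \<Longrightarrow> x \<in> U \<Longrightarrow> \<exists>\<P>\<in>\<C>. \<exists>W\<in>\<P>. x \<in> W \<and> W \<subseteq> U"
begin

lemma thread_separates:
  assumes "openin X U" "a \<in> U" "b \<in> topspace X" "b \<notin> U"
  shows "thread X \<C> a \<noteq> thread X \<C> b"
proof -
  obtain \<P> W where \<P>: "\<P> \<in> \<C>" and W: "W \<in> \<P>" "a \<in> W" "W \<subseteq> U"
    using base[OF assms(1,2)] by blast
  have "a \<in> topspace X"
    using openin_subset[OF assms(1)] assms(2) by blast
  moreover have W_sub: "W \<subseteq> topspace X"
    using openin_subset[OF openin_members[OF \<P> W(1)]] .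
  ultimately have "thread X \<C> a \<P> \<in> pclass X \<P> ` W" "thread X \<C> b \<P> \<notin> pclass X \<P> ` W"
    using thread_in_image_iff[OF \<P> W(1) W_sub] W(2,3) assms(3,4) by auto
  then show ?thesis
    by auto
qed

lemma inj_on_thread:
  assumes "t0_space X"
  shows "inj_on (thread X \<C>) (topspace X)"
proof (rule inj_onI, rule ccontr)
  fix x y assume xy: "x \<in> topspace X" "y \<in> topspace X" "thread X \<C> x = thread X \<C> y" "x \<noteq> y"
  then obtain U where "openin X U" "x \<notin> U \<longleftrightarrow> y \<in> U"
    using assms unfolding t0_space_def by blast
  then show False
    using thread_separates xy by metis
qed

lemma open_map_thread:
  "open_map X (subtopology (inverse_limit X \<C>) (thread X \<C> ` topspace X)) (thread X \<C>)"
  unfolding open_map_def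
proof (intro allI impI)
  fix U assume U: "openin X U"
  define N where "N = \<Union>{{y \<in> topspace (inverse_limit X \<C>). y \<P> \<in> pclass X \<P> ` W} | \<P> W.
                              \<P> \<in> \<C> \<and> W \<in> \<P> \<and> W \<subseteq> U}"
  have N_open: "openin (inverse_limit X \<C>) N"
    unfolding N_def
  proof (rule openin_Union)
    fix S assume "S \<in> {{y \<in> topspace (inverse_limit X \<C>). y \<P> \<in> pclass X \<P> ` W} | \<P> W.
                              \<P> \<in> \<C> \<and> W \<in> \<P> \<and> W \<subseteq> U}"
    then obtain \<P> W where "\<P> \<in> \<C>" "W \<in> \<P>"
      and S: "S = {y \<in> topspace (inverse_limit X \<C>). y \<P> \<in> pclass X \<P> ` W}"
      by blast
    then show "openin (inverse_limit X \<C>) S"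
      using openin_inverse_limit_preimage by blast
  qed
  have N_iff: "y \<in> N \<longleftrightarrow> y \<in> topspace (inverse_limit X \<C>) \<and>
                 (\<exists>\<P>\<in>\<C>. \<exists>W\<in>\<P>. W \<subseteq> U \<and> y \<P> \<in> pclass X \<P> ` W)" for y
    unfolding N_def by blast
  have N_thread: "thread X \<C> x \<in> N \<longleftrightarrow> x \<in> U" if x: "x \<in> topspace X" for x
  proof
    assume "thread X \<C> x \<in> N"
    then obtain \<P> W where \<P>: "\<P> \<in> \<C>" and W: "W \<in> \<P>" "W \<subseteq> U"
      and "thread X \<C> x \<P> \<in> pclass X \<P> ` W"
      unfolding N_iff by blast
    moreover have "W \<subseteq> topspace X"
      using openin_subset[OF openin_members[OF \<P> W(1)]] .
    ultimately show "x \<in> U"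
      using thread_in_image_iff[OF \<P> W(1) _ x] W(2) by auto
  next
    assume "x \<in> U"
    obtain \<P> W where \<P>: "\<P> \<in> \<C>" and W: "W \<in> \<P>" "x \<in> W" "W \<subseteq> U"
      using base[OF U \<open>x \<in> U\<close>] by blast
    have "W \<subseteq> topspace X"
      using openin_subset[OF openin_members[OF \<P> W(1)]] .
    then have "thread X \<C> x \<P> \<in> pclass X \<P> ` W"
      using thread_in_image_iff[OF \<P> W(1) _ x] W(2) by simp
    moreover have "thread X \<C> x \<in> topspace (inverse_limit X \<C>)"
      using continuous_map_image_subset_topspace[OF continuous_map_thread] x by blast
    ultimately show "thread X \<C> x \<in> N"
      unfolding N_iff using \<P> W by blast
  qed
  have "thread X \<C> ` U = thread X \<C> ` topspace X \<inter> N"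
    using openin_subset[OF U] N_thread by auto
  then show "openin (subtopology (inverse_limit X \<C>) (thread X \<C> ` topspace X)) (thread X \<C> ` U)"
    using N_open by (simp add: openin_subtopology_Int2)
qed

lemma embedding_map_thread:
  assumes "t0_space X"
  shows "embedding_map X (inverse_limit X \<C>) (thread X \<C>)"
proof -
  let ?D = "thread X \<C> ` topspace X"
  have "continuous_map X (subtopology (inverse_limit X \<C>) ?D) (thread X \<C>)"
    using continuous_map_thread by (simp add: continuous_map_in_subtopology)
  then have "embedding_map X (subtopology (inverse_limit X \<C>) ?D) (thread X \<C>)"
    using open_map_thread inj_on_thread[OF assms] by (rule injective_open_imp_embedding_map)
  then show ?thesis
    by (simp add: embedding_map_def subtopology_subtopology)
qed

end

end

theorem theorem8:
  fixes X :: "'a topology" and \<C> :: "'a set set set"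
  assumes "completely_regular_space X" and "t1_space X"
    and "I_favorable X"
    and "is_T_club X \<C>"
  shows "\<exists>D. D \<subseteq> topspace (inverse_limit X \<C>)
           \<and> (inverse_limit X \<C>) closure_of D = topspace (inverse_limit X \<C>)
           \<and> subtopology (inverse_limit X \<C>) D homeomorphic_space X"
proof (intro exI conjI)
  note openin_members = T_club_openin[OF assms(4)]
  note base = T_club_cozero_base[OF assms(1,4)]
  have embedding: "embedding_map X (inverse_limit X \<C>) (thread X \<C>)"
    using embedding_map_thread[OF openin_members base t1_imp_t0_space[OF assms(2)]] .
  show "thread X \<C> ` topspace X \<subseteq> topspace (inverse_limit X \<C>)"
    using continuous_map_image_subset_topspace[OF continuous_map_thread[OF openin_members]] .
  show "inverse_limit X \<C> closure_of (thread X \<C> ` topspace X) = topspace (inverse_limit X \<C>)"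
    using dense_thread_image[OF openin_members T_club_directed[OF assms(4)]] .
  show "subtopology (inverse_limit X \<C>) (thread X \<C> ` topspace X) homeomorphic_space X"
    using embedding_map_imp_homeomorphic_space[OF embedding] homeomorphic_space_sym by blast
qed

end
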